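(* Let $R$ be a commutative ring and let $R^{(-1)}R$ denote the pointwise localization of $R$ with respect to the subset $S=R$. Then $\mathrm{Spec}(R^{(-1)}R)$ is Hausdorff with respect to the Zariski topology, and also Hausdorff with respect to the flat topology.
   Context: For $a,b$ in a commutative ring, $b$ is a pointwise inverse of $a$ if $a=a^2b$ and $b=b^2a$. For a subset $S\subseteq R$, $S^{(-1)}R=R[x_s:s\in S]/I$ where $I$ is generated by $sx_s^2-x_s$ and $s^2x_s-s$ ($s\in S$). The flat topology on $\mathrm{Spec}(A)$ is the topology having as a basis of open sets the sets $V(I)=\{\mathfrak p:I\subseteq\mathfrak p\}$ with $I$ ranging over finitely generated ideals of $A$. *)

theory Defs
  imports "HOL-Analysis.T1_Spaces" "HOL-Algebra.QuotRing" "HOL-Library.Poly_Mapping"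
begin

text \<open>Polynomials over a commutative ring 'a in variables indexed by a type 'v:
  finitely supported maps from monomials (finitely supported exponent vectors) to coefficients.\<close>
type_synonym ('v, 'a) mpoly = "('v \<Rightarrow>\<^sub>0 nat) \<Rightarrow>\<^sub>0 'a"

definition poly_ring :: "('v, 'a::comm_ring_1) mpoly ring" where
  "poly_ring = \<lparr>carrier = UNIV, mult = (*), one = 1, zero = 0, add = (+)\<rparr>"

definition pconst :: "'a::comm_ring_1 \<Rightarrow> ('v, 'a) mpoly" where
  "pconst c = Poly_Mapping.single 0 c"

definition pvar :: "'v \<Rightarrow> ('v, 'a::comm_ring_1) mpoly" where
  "pvar v = Poly_Mapping.single (Poly_Mapping.single v 1) 1"

definition ptwise_ideal :: "'a::comm_ring_1 set \<Rightarrow> ('a, 'a) mpoly set" where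
  "ptwise_ideal S = genideal poly_ring
     (\<Union>s\<in>S. {pconst s * pvar s ^ 2 - pvar s, pconst s ^ 2 * pvar s - pconst s})"

definition ptwise_loc :: "'a::comm_ring_1 set \<Rightarrow> ('a, 'a) mpoly set ring" where
  "ptwise_loc S = poly_ring Quot (ptwise_ideal S)"

definition Spec :: "('b, 'c) ring_scheme \<Rightarrow> 'b set set" where
  "Spec A = {P. primeideal P A}"

definition Vset :: "('b, 'c) ring_scheme \<Rightarrow> 'b set \<Rightarrow> 'b set set" where
  "Vset A J = {P \<in> Spec A. J \<subseteq> P}"

definition zariski_top :: "('b, 'c) ring_scheme \<Rightarrow> 'b set topology" where
  "zariski_top A = topology_generated_by {Spec A - Vset A J | J. ideal J A}"

definition flat_top :: "('b, 'c) ring_scheme \<Rightarrow> 'b set topology" where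
  "flat_top A = topology_generated_by
     {Vset A (genideal A F) | F. finite F \<and> F \<subseteq> carrier A}"

end

theory Submission
  imports Defs
begin

text \<open>
  In the pointwise localization \<open>A\<close> of \<open>R\<close> at \<open>R\<close> every constant \<open>r\<close> has the pointwise inverse \<open>x\<^sub>r\<close>, so
  \<open>e = r x\<^sub>r\<close> is an idempotent lying in exactly the same primes as \<open>r\<close>. Modulo a prime
  \<open>P\<close> each \<open>x\<^sub>s\<close> is either \<open>0\<close> (if \<open>s \<in> P\<close>) or \<open>1/s\<close>, hence every element of \<open>A\<close> is
  congruent to a fraction \<open>r/c\<close> of constants with \<open>c \<notin> P\<close>; this forces a prime of \<open>A\<close> to be
  determined by which constants it contains. Two distinct primes are therefore separated by
  a constant, hence by an idempotent \<open>e\<close>, and then \<open>V(e)\<close> and \<open>V(1 - e)\<close> are disjoint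
  neighbourhoods that are open both in the Zariski and in the flat topology.
\<close>

lemma poly_ring_cring: "cring (poly_ring :: ('v, 'a::comm_ring_1) mpoly ring)"
proof (rule cringI)
  show "abelian_group (poly_ring :: ('v, 'a) mpoly ring)"
    by (rule abelian_groupI) (auto simp: poly_ring_def intro: left_minus)
  show "Group.comm_monoid (poly_ring :: ('v, 'a) mpoly ring)"
    by (rule monoid.monoid_comm_monoidI)
      (auto intro!: monoidI simp: poly_ring_def mult.assoc mult.commute)
qed (auto simp: poly_ring_def distrib_right)

lemma minus_poly_ring: "a \<ominus>\<^bsub>(poly_ring :: ('v, 'a::comm_ring_1) mpoly ring)\<^esub> b = a - b"
proof -
  interpret cring "poly_ring :: ('v, 'a) mpoly ring" by (rule poly_ring_cring)
  have "\<ominus>\<^bsub>(poly_ring :: ('v, 'a) mpoly ring)\<^esub> b = - b"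
    by (rule add.inv_equality) (auto simp: poly_ring_def)
  then show ?thesis by (simp add: a_minus_def poly_ring_def)
qed

lemma pconst_one [simp]: "pconst 1 = (1 :: ('v, 'a::comm_ring_1) mpoly)"
  by (simp add: pconst_def)

lemma pconst_mult: "pconst (a * b) = (pconst a * pconst b :: ('v, 'a::comm_ring_1) mpoly)"
  by (simp add: pconst_def mult_single)

lemma pconst_add: "pconst (a + b) = (pconst a + pconst b :: ('v, 'a::comm_ring_1) mpoly)"
  by (simp add: pconst_def single_add)

lemma pvar_power:
  "(pvar v ^ k :: ('v, 'a::comm_ring_1) mpoly) = Poly_Mapping.single (Poly_Mapping.single v k) 1"
proof (induct k)
  case (Suc k)
  have "Poly_Mapping.single v (Suc k) = Poly_Mapping.single v 1 + Poly_Mapping.single v k"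
    by (simp add: single_add[symmetric])
  with Suc show ?case by (simp add: pvar_def mult_single)
qed simp

lemma update_eq_add_single:
  "a \<notin> Poly_Mapping.keys f \<Longrightarrow> Poly_Mapping.update a b f = f + Poly_Mapping.single a b"
  by (rule poly_mapping_eqI) (auto simp: lookup_update lookup_add lookup_single in_keys_iff when_def)

lemma mpoly_induct [case_names const var add mult]:
  fixes P :: "('v, 'a::comm_ring_1) mpoly \<Rightarrow> bool"
  assumes P_const: "\<And>c. P (pconst c)" and P_var: "\<And>v. P (pvar v)"
    and P_add: "\<And>f g. P f \<Longrightarrow> P g \<Longrightarrow> P (f + g)"
    and P_mult: "\<And>f g. P f \<Longrightarrow> P g \<Longrightarrow> P (f * g)"
  shows "P f"
proof -
  have P_one: "P 1" using P_const[of 1] by simp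
  have P_monomial: "P (Poly_Mapping.single m 1)" for m :: "'v \<Rightarrow>\<^sub>0 nat"
  proof (induct m rule: update_induct)
    case (update m v k)
    have "P (pvar v ^ k)" by (induct k) (auto intro: P_one P_mult P_var)
    moreover have "Poly_Mapping.single (Poly_Mapping.update v k m) (1::'a)
        = Poly_Mapping.single m 1 * pvar v ^ k"
      using update by (simp add: update_eq_add_single mult_single pvar_power)
    ultimately show ?case using update P_mult by metis
  qed (simp add: P_one)
  have P_term: "P (Poly_Mapping.single m c)" for m c
    using P_mult[OF P_const P_monomial, of c m] by (simp add: pconst_def mult_single)
  show ?thesis
  proof (induct f rule: update_induct)
    case const
    show ?case using P_const[of 0] by (simp add: pconst_def)
  qed (simp add: update_eq_add_single P_add P_term)
qed

lemma mpoly_ex_fraction_mod_ideal: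
  fixes J :: "('v, 'a::comm_ring_1) mpoly set" and D :: "'a set"
  assumes J: "ideal J poly_ring"
    and D_one: "1 \<in> D" and D_mult: "\<And>c d. c \<in> D \<Longrightarrow> d \<in> D \<Longrightarrow> c * d \<in> D"
    and pvar_fraction: "\<And>v. \<exists>c\<in>D. \<exists>r. pconst c * pvar v - pconst r \<in> J"
  shows "\<exists>c\<in>D. \<exists>r. pconst c * f - pconst r \<in> J"
proof -
  interpret J: ideal J poly_ring by (rule J)
  have J_zero: "0 \<in> J"
    using additive_subgroup.zero_closed[OF J.is_additive_subgroup] by (simp add: poly_ring_def)
  have J_add: "x + y \<in> J" if "x \<in> J" "y \<in> J" for x y
    using additive_subgroup.a_closed[OF J.is_additive_subgroup that] by (simp add: poly_ring_def)
  have J_mult: "a * x \<in> J" if "x \<in> J" for a x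
    using J.I_l_closed[OF that, of a] by (simp add: poly_ring_def)
  show ?thesis
  proof (induct f rule: mpoly_induct)
    case (const a)
    have "pconst 1 * pconst a - pconst a = (0 :: ('v, 'a) mpoly)" by simp
    then show ?case using D_one J_zero by metis
  next
    case (var v)
    show ?case by (rule pvar_fraction)
  next
    case (add f g)
    then obtain c1 r1 c2 r2 where "c1 \<in> D" "pconst c1 * f - pconst r1 \<in> J"
      and "c2 \<in> D" "pconst c2 * g - pconst r2 \<in> J" by blast
    moreover have "pconst (c1 * c2) * (f + g) - pconst (c2 * r1 + c1 * r2)
      = pconst c2 * (pconst c1 * f - pconst r1) + pconst c1 * (pconst c2 * g - pconst r2)"
      by (simp add: pconst_mult pconst_add algebra_simps)
    ultimately show ?case using D_mult J_add J_mult by metis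
  next
    case (mult f g)
    then obtain c1 r1 c2 r2 where "c1 \<in> D" "pconst c1 * f - pconst r1 \<in> J"
      and "c2 \<in> D" "pconst c2 * g - pconst r2 \<in> J" by blast
    moreover have "pconst (c1 * c2) * (f * g) - pconst (r1 * r2)
      = (pconst c2 * g) * (pconst c1 * f - pconst r1) + pconst r1 * (pconst c2 * g - pconst r2)"
      by (simp add: pconst_mult algebra_simps)
    ultimately show ?case using D_mult J_add J_mult by metis
  qed
qed

definition (in ring) ptwise_inverse :: "'a \<Rightarrow> 'a \<Rightarrow> bool" where
  "ptwise_inverse a b \<longleftrightarrow> a = a \<otimes> a \<otimes> b \<and> b = b \<otimes> b \<otimes> a"

lemma (in cring) ptwise_inverse_idempotent:
  assumes "a \<in> carrier R" "b \<in> carrier R" "ptwise_inverse a b"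
  shows "(a \<otimes> b) \<otimes> (a \<otimes> b) = a \<otimes> b"
proof -
  have "(a \<otimes> b) \<otimes> (a \<otimes> b) = (a \<otimes> a \<otimes> b) \<otimes> b" using assms(1,2) by algebra
  then show ?thesis using assms unfolding ptwise_inverse_def by metis
qed

lemma (in cring) primeideal_ptwise_inverse:
  assumes P: "primeideal P R" and ab: "a \<in> carrier R" "b \<in> carrier R" "ptwise_inverse a b"
  shows "a \<otimes> b \<in> P \<longleftrightarrow> a \<in> P"
    and "a \<in> P \<Longrightarrow> b \<in> P"
    and "a \<notin> P \<Longrightarrow> a \<otimes> b \<ominus> \<one> \<in> P"
proof -
  interpret P: primeideal P R by (rule P)
  have a: "a = a \<otimes> (a \<otimes> b)" and b: "b = b \<otimes> b \<otimes> a"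
    using ab by (simp_all add: ptwise_inverse_def m_assoc)
  show "a \<otimes> b \<in> P \<longleftrightarrow> a \<in> P"
    using a ab P.I_l_closed P.I_r_closed by (metis m_closed)
  show "a \<in> P \<Longrightarrow> b \<in> P"
    using b ab P.I_l_closed by (metis m_closed)
  assume "a \<notin> P"
  have "a \<otimes> (a \<otimes> b \<ominus> \<one>) = a \<otimes> (a \<otimes> b) \<ominus> a" using ab(1,2) by algebra
  also have "\<dots> = \<zero>" using a ab(1) by (metis minus_eq r_neg)
  finally have "a \<otimes> (a \<otimes> b \<ominus> \<one>) = \<zero>" .
  then show "a \<otimes> b \<ominus> \<one> \<in> P"
    using P.I_prime[of a "a \<otimes> b \<ominus> \<one>"] \<open>a \<notin> P\<close> ab P.zero_closed by auto
qed

lemma (in cring) idempotent_compl: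
  "e \<in> carrier R \<Longrightarrow> e \<otimes> e = e \<Longrightarrow> (\<one> \<ominus> e) \<otimes> (\<one> \<ominus> e) = \<one> \<ominus> e"
proof -
  assume "e \<in> carrier R" "e \<otimes> e = e"
  moreover have "(\<one> \<ominus> e) \<otimes> (\<one> \<ominus> e) = \<one> \<ominus> e \<ominus> e \<oplus> e \<otimes> e"
    using \<open>e \<in> carrier R\<close> by algebra
  ultimately show ?thesis by (simp add: minus_eq a_assoc l_neg)
qed

lemma (in cring) primeideal_idempotent_compl:
  assumes P: "primeideal P R" and e: "e \<in> carrier R" "e \<otimes> e = e"
  shows "\<one> \<ominus> e \<in> P \<longleftrightarrow> e \<notin> P"
proof -
  interpret P: primeideal P R by (rule P)
  have "e \<otimes> (\<one> \<ominus> e) = e \<ominus> e \<otimes> e" using e(1) by algebra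
  then have "e \<otimes> (\<one> \<ominus> e) \<in> P" using e P.zero_closed by (simp add: minus_eq r_neg)
  then have "e \<in> P \<or> \<one> \<ominus> e \<in> P" using P.I_prime e(1) by simp
  moreover have "\<not> (e \<in> P \<and> \<one> \<ominus> e \<in> P)"
  proof
    assume "e \<in> P \<and> \<one> \<ominus> e \<in> P"
    then have "e \<oplus> (\<one> \<ominus> e) \<in> P" by (simp add: P.a_closed)
    moreover have "e \<oplus> (\<one> \<ominus> e) = \<one>" using e(1) by algebra
    ultimately show False using P.one_imp_carrier P.I_notcarr by simp
  qed
  ultimately show ?thesis by blast
qed

lemma (in ring) Vset_genideal_singleton:
  "a \<in> carrier R \<Longrightarrow> Vset R (genideal R {a}) = {P \<in> Spec R. a \<in> P}"
  using Idl_subset_ideal[of _ "{a}"] by (auto simp: Vset_def Spec_def primeideal_def)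

lemma (in cring) Vset_idempotent_eq_compl:
  assumes "e \<in> carrier R" "e \<otimes> e = e"
  shows "Vset R (genideal R {e}) = Spec R - Vset R (genideal R {\<one> \<ominus> e})"
  using assms primeideal_idempotent_compl
  by (auto simp: Vset_genideal_singleton Spec_def)

lemma (in ring) topspace_zariski_top: "topspace (zariski_top R) = Spec R"
proof -
  have "Vset R (carrier R) = {}"
    using primeideal.I_notcarr ideal.Icarr primeideal.axioms(1)
    by (fastforce simp: Vset_def Spec_def)
  then have "Spec R \<in> {Spec R - Vset R J | J. ideal J R}" using oneideal by force
  then show ?thesis unfolding zariski_top_def by auto
qed

lemma (in ring) topspace_flat_top: "topspace (flat_top R) = Spec R"
proof -
  have "Vset R (genideal R {}) = Spec R"
    using Idl_subset_ideal[of _ "{}"] by (auto simp: Vset_def Spec_def primeideal_def)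
  then have "Spec R \<in> {Vset R (genideal R F) | F. finite F \<and> F \<subseteq> carrier R}" by force
  moreover have "Vset R (genideal R F) \<subseteq> Spec R" for F unfolding Vset_def by auto
  ultimately show ?thesis unfolding flat_top_def by auto
qed

lemma (in cring) openin_zariski_top_idempotent:
  assumes "e \<in> carrier R" "e \<otimes> e = e"
  shows "openin (zariski_top R) (Vset R (genideal R {e}))"
  unfolding Vset_idempotent_eq_compl[OF assms] zariski_top_def
  by (rule topology_generated_by_Basis) (use genideal_ideal assms(1) in auto)

lemma (in ring) openin_flat_top_Vset:
  "finite F \<Longrightarrow> F \<subseteq> carrier R \<Longrightarrow> openin (flat_top R) (Vset R (genideal R F))"
  unfolding flat_top_def by (rule topology_generated_by_Basis) auto

lemma (in cring) Hausdorff_if_idempotents_separate: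
  assumes topspace: "topspace T = Spec R"
    and openin: "\<And>e. e \<in> carrier R \<Longrightarrow> e \<otimes> e = e \<Longrightarrow> openin T (Vset R (genideal R {e}))"
    and separate: "\<And>P Q. P \<in> Spec R \<Longrightarrow> Q \<in> Spec R \<Longrightarrow> P \<noteq> Q \<Longrightarrow>
        \<exists>e\<in>carrier R. e \<otimes> e = e \<and> e \<in> P \<and> e \<notin> Q"
  shows "Hausdorff_space T"
  unfolding Hausdorff_space_def topspace
proof (intro allI impI, elim conjE)
  fix P Q assume "P \<in> Spec R" "Q \<in> Spec R" "P \<noteq> Q"
  then obtain e where e: "e \<in> carrier R" "e \<otimes> e = e" "e \<in> P" "e \<notin> Q"
    using separate by blast
  have compl: "\<one> \<ominus> e \<in> carrier R" "(\<one> \<ominus> e) \<otimes> (\<one> \<ominus> e) = \<one> \<ominus> e"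
    using e idempotent_compl by auto
  have "Q \<in> Vset R (genideal R {\<one> \<ominus> e})"
    using \<open>Q \<in> Spec R\<close> e primeideal_idempotent_compl
    by (simp add: Vset_genideal_singleton compl(1) Spec_def)
  moreover have "P \<in> Vset R (genideal R {e})"
    using \<open>P \<in> Spec R\<close> e by (simp add: Vset_genideal_singleton)
  moreover have "disjnt (Vset R (genideal R {e})) (Vset R (genideal R {\<one> \<ominus> e}))"
    unfolding Vset_idempotent_eq_compl[OF e(1,2)] disjnt_def by blast
  ultimately show "\<exists>U V. openin T U \<and> openin T V \<and> P \<in> U \<and> Q \<in> V \<and> disjnt U V"
    using openin[OF e(1,2)] openin[OF compl] by blast
qed

text \<open>A surjection from \<open>R[x\<^sub>r : r \<in> R]\<close> onto \<open>A\<close> sending each \<open>x\<^sub>r\<close> to a pointwise inverse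
  of \<open>r\<close>: this is all that is used about the pointwise localization.\<close>

locale ptwise_quotient = cring A for A (structure) +
  fixes h :: "('r, 'r::comm_ring_1) mpoly \<Rightarrow> 'a"
  assumes hom: "h \<in> ring_hom poly_ring A"
    and surj: "carrier A \<subseteq> range h"
    and ptwise_inverse_pvar: "ptwise_inverse (h (pconst s)) (h (pvar s))"
begin

lemma h_closed [simp]: "h f \<in> carrier A"
  using ring_hom_closed[OF hom, of f] by (simp add: poly_ring_def)

lemma h_mult [simp]: "h (f * g) = h f \<otimes> h g"
  using ring_hom_mult[OF hom, of f g] by (simp add: poly_ring_def)

lemma h_add [simp]: "h (f + g) = h f \<oplus> h g"
  using ring_hom_add[OF hom, of f g] by (simp add: poly_ring_def)

lemma h_one [simp]: "h 1 = \<one>"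
  using ring_hom_one[OF hom] by (simp add: poly_ring_def)

lemma h_diff [simp]: "h (f - g) = h f \<ominus> h g"
proof -
  have "h (f - g) \<oplus> h g = h f" using h_add[of "f - g" g] by simp
  then show ?thesis by (metis add.inv_solve_right h_closed minus_eq)
qed

lemma ring_hom_ring_h: "ring_hom_ring poly_ring A h"
  using ring_hom_ringI2[OF cring.axioms(1)[OF poly_ring_cring] ring_axioms hom] .

text \<open>The key point: every element is congruent modulo \<open>P \<inter> Q\<close> to a fraction of constants
  whose denominator avoids \<open>P\<close>.\<close>

lemma primeideal_subset_if_same_constants:
  assumes P: "primeideal P A" and Q: "primeideal Q A"
    and same: "\<And>r. h (pconst r) \<in> P \<longleftrightarrow> h (pconst r) \<in> Q"
  shows "P \<subseteq> Q"
proof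
  interpret P: primeideal P A by (rule P)
  interpret Q: primeideal Q A by (rule Q)
  define J where "J = {f \<in> carrier poly_ring. h f \<in> P \<inter> Q}"
  define D where "D = {c. h (pconst c) \<notin> P}"
  have J: "ideal J poly_ring"
    unfolding J_def by (rule ring_hom_ring.ideal_vimage[OF ring_hom_ring_h i_intersect])
      (rule P.is_ideal, rule Q.is_ideal)
  have mem_J: "f \<in> J \<longleftrightarrow> h f \<in> P \<and> h f \<in> Q" for f by (simp add: J_def poly_ring_def)
  have "\<exists>c\<in>D. \<exists>r. pconst c * f - pconst r \<in> J" for f
  proof (rule mpoly_ex_fraction_mod_ideal[OF J])
    show "1 \<in> D" using P.one_imp_carrier P.I_notcarr by (auto simp: D_def)
    show "c * d \<in> D" if "c \<in> D" "d \<in> D" for c d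
      using that P.I_prime[of "h (pconst c)" "h (pconst d)"] by (auto simp: D_def pconst_mult)
    show "\<exists>c\<in>D. \<exists>r. pconst c * pvar v - pconst r \<in> J" for v
    proof (cases "h (pconst v) \<in> P")
      case True
      then have "h (pvar v) \<in> P" "h (pvar v) \<in> Q"
        using same primeideal_ptwise_inverse(2)[OF _ h_closed h_closed ptwise_inverse_pvar] P Q
        by blast+
      moreover have "pconst 1 * pvar v - pconst 0 = pvar v" by (simp add: pconst_def)
      ultimately show ?thesis using \<open>1 \<in> D\<close> mem_J by metis
    next
      case False
      then have "h (pconst v * pvar v - pconst 1) \<in> P" "h (pconst v * pvar v - pconst 1) \<in> Q"
        using same primeideal_ptwise_inverse(3)[OF _ h_closed h_closed ptwise_inverse_pvar] P Q
        by auto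
      then have "pconst v * pvar v - pconst 1 \<in> J" using mem_J by blast
      then show ?thesis using False unfolding D_def by blast
    qed
  qed
  fix x assume "x \<in> P"
  then obtain f where x: "x = h f" using surj P.Icarr by blast
  obtain c r where c: "h (pconst c) \<notin> P" and cr: "h (pconst c * f - pconst r) \<in> P \<inter> Q"
    using \<open>\<exists>c\<in>D. \<exists>r. pconst c * f - pconst r \<in> J\<close> by (auto simp: D_def mem_J)
  define y where "y = h (pconst c * f - pconst r)"
  have y: "y \<in> P" "y \<in> Q" using cr by (simp_all add: y_def)
  have closed: "h (pconst c) \<in> carrier A" "x \<in> carrier A" "h (pconst r) \<in> carrier A"
    using x by simp_all
  have y_eq: "y = h (pconst c) \<otimes> x \<ominus> h (pconst r)" by (simp add: y_def x)
  have "h (pconst r) = h (pconst c) \<otimes> x \<ominus> y" using closed unfolding y_eq by algebra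
  moreover have "h (pconst c) \<otimes> x \<ominus> y \<in> P"
    using y closed \<open>x \<in> P\<close> by (simp add: minus_eq P.a_closed P.a_inv_closed P.I_l_closed)
  ultimately have "h (pconst r) \<in> Q" using same by metis
  moreover have "h (pconst c) \<otimes> x = y \<oplus> h (pconst r)" using closed unfolding y_eq by algebra
  ultimately have "h (pconst c) \<otimes> x \<in> Q" using y by (simp add: Q.a_closed)
  then show "x \<in> Q" using Q.I_prime[of "h (pconst c)" x] c same x by auto
qed

lemma idempotent_separates_Spec:
  assumes "P \<in> Spec A" "Q \<in> Spec A" "P \<noteq> Q"
  shows "\<exists>e\<in>carrier A. e \<otimes> e = e \<and> e \<in> P \<and> e \<notin> Q"
proof -
  have P: "primeideal P A" and Q: "primeideal Q A" using assms by (auto simp: Spec_def)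
  obtain r where r: "h (pconst r) \<in> P \<longleftrightarrow> h (pconst r) \<notin> Q"
    using primeideal_subset_if_same_constants[OF P Q] primeideal_subset_if_same_constants[OF Q P]
      assms(3) by blast
  define e where "e = h (pconst r) \<otimes> h (pvar r)"
  have e: "e \<in> carrier A" "e \<otimes> e = e"
    using ptwise_inverse_idempotent[OF h_closed h_closed ptwise_inverse_pvar] by (simp_all add: e_def)
  have mem_e: "e \<in> X \<longleftrightarrow> h (pconst r) \<in> X" if "primeideal X A" for X
    using primeideal_ptwise_inverse(1)[OF that h_closed h_closed ptwise_inverse_pvar] by (simp add: e_def)
  show ?thesis
  proof (cases "h (pconst r) \<in> P")
    case True
    then show ?thesis using r e mem_e[OF P] mem_e[OF Q] by blast
  next
    case False
    then show ?thesis
      using r e idempotent_compl primeideal_idempotent_compl[OF P e] primeideal_idempotent_compl[OF Q e]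
        mem_e[OF P] mem_e[OF Q] by auto
  qed
qed

end

lemma ptwise_quotient_ptwise_loc:
  "ptwise_quotient (ptwise_loc (UNIV :: 'a::comm_ring_1 set))
     (\<lambda>f. ptwise_ideal UNIV +>\<^bsub>poly_ring\<^esub> f)"
proof -
  let ?R = "poly_ring :: ('a, 'a) mpoly ring"
  let ?I = "ptwise_ideal (UNIV :: 'a set)"
  let ?h = "\<lambda>f. ?I +>\<^bsub>?R\<^esub> f"
  interpret R: cring ?R by (rule poly_ring_cring)
  have I: "ideal ?I ?R"
    unfolding ptwise_ideal_def by (rule R.genideal_ideal) (simp add: poly_ring_def)
  interpret I: ideal ?I ?R by (rule I)
  have cring: "cring (?R Quot ?I)" by (rule I.quotient_is_cring[OF R.is_cring])
  have hom: "?h \<in> ring_hom ?R (?R Quot ?I)" by (rule I.rcos_ring_hom)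
  have h_mult: "?h (f * g) = ?h f \<otimes>\<^bsub>?R Quot ?I\<^esub> ?h g" for f g
    using ring_hom_mult[OF hom, of f g] by (simp add: poly_ring_def)
  have h_eqI: "?h f = ?h g" if "f - g \<in> ?I" for f g
    using R.quotient_eq_iff_same_a_r_cos[OF I, of f g] that unfolding minus_poly_ring
    by (simp add: poly_ring_def)
  have generators: "pconst s * pvar s ^ 2 - pvar s \<in> ?I" "pconst s ^ 2 * pvar s - pconst s \<in> ?I"
    for s :: 'a
    using R.genideal_self[of "\<Union>s. {pconst s * pvar s ^ 2 - pvar s, pconst s ^ 2 * pvar s - pconst s}"]
    unfolding ptwise_ideal_def by (auto simp: poly_ring_def)
  have "ring.ptwise_inverse (?R Quot ?I) (?h (pconst s)) (?h (pvar s))" for s :: 'a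
  proof -
    have "?h (pconst s) = ?h (pconst s * pconst s * pvar s)"
      using h_eqI[OF generators(2)] by (simp add: power2_eq_square)
    moreover have "?h (pvar s) = ?h (pvar s * pvar s * pconst s)"
      using h_eqI[OF generators(1)] by (simp add: power2_eq_square ac_simps)
    ultimately show ?thesis
      unfolding ring.ptwise_inverse_def[OF cring.axioms(1)[OF cring]] h_mult by simp
  qed
  moreover have "carrier (?R Quot ?I) \<subseteq> range ?h"
    unfolding FactRing_def A_RCOSETS_def' by auto
  ultimately show ?thesis
    unfolding ptwise_loc_def using cring hom by (intro ptwise_quotient.intro ptwise_quotient_axioms.intro)
qed

theorem lemma3p7:
  shows "Hausdorff_space (zariski_top (ptwise_loc (UNIV :: 'a::comm_ring_1 set)))
       \<and> Hausdorff_space (flat_top (ptwise_loc (UNIV :: 'a::comm_ring_1 set)))"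
proof -
  interpret ptwise_quotient "ptwise_loc (UNIV :: 'a set)"
    "\<lambda>f. ptwise_ideal UNIV +>\<^bsub>poly_ring\<^esub> f"
    by (rule ptwise_quotient_ptwise_loc)
  have "Hausdorff_space (zariski_top (ptwise_loc (UNIV :: 'a set)))"
    by (rule Hausdorff_if_idempotents_separate[OF topspace_zariski_top
          openin_zariski_top_idempotent idempotent_separates_Spec])
  moreover have "Hausdorff_space (flat_top (ptwise_loc (UNIV :: 'a set)))"
    by (rule Hausdorff_if_idempotents_separate[OF topspace_flat_top _ idempotent_separates_Spec])
      (simp add: openin_flat_top_Vset)
  ultimately show ?thesis ..
qed

end
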